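(* Let $(V,E)$ be an almost-acyclic $k$-uniform hypergraph, let $t$ be the number of its connected components with at least two vertices, and let $r=|E|$. Then every $B\in\mathcal B(E)$ satisfies $\|\Sigma B\|_{\mathsf H}\ge\max\{2t,\tfrac45r\}$.
   Context: $N\ge2$, $\mathbb Z_N=\mathbb Z/N\mathbb Z$. A $k$-uniform hypergraph $(V,E)$ has finite vertex set $V$ and a set $E$ of edges, each an ordered $k$-tuple of distinct vertices. It is almost-acyclic if for every $\ell\ge0$, any $\ell$ distinct edges together cover at least $\ell(k-1.1)$ vertices. For $y\in\mathbb Z_N^V$, $\|y\|_{\mathsf H}=|\mathrm{supp}(y)|$ is the number of nonzero coordinates. $\mathcal B(E)$ is the set of maps $B:E\to\mathbb Z_N^V$ such that for each $e=(v_1,\dots,v_k)\in E$, $\mathrm{supp}(B(e))\subseteq\{v_1,\dots,v_k\}$ and $|\mathrm{supp}(B(e))|\ge3$; $\Sigma B=\sum_{e\in E}B(e)\in\mathbb Z_N^V$. *)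

theory Defs
  imports Complex_Main
begin

(* Elements of Z_N are represented by integers; an integer represents 0 in Z_N iff N divides it.
   A vector y in Z_N^V is a function 'v => int (only values on V matter). *)

definition zsupp :: "int \<Rightarrow> 'v set \<Rightarrow> ('v \<Rightarrow> int) \<Rightarrow> 'v set" where
  "zsupp N V y = {v \<in> V. \<not> N dvd y v}"

definition hnorm :: "int \<Rightarrow> 'v set \<Rightarrow> ('v \<Rightarrow> int) \<Rightarrow> nat" where
  "hnorm N V y = card (zsupp N V y)"

definition uniform_hypergraph :: "nat \<Rightarrow> 'v set \<Rightarrow> 'v list set \<Rightarrow> bool" where
  "uniform_hypergraph k V E \<longleftrightarrow> finite V \<and>
     (\<forall>e\<in>E. length e = k \<and> distinct e \<and> set e \<subseteq> V)"

definition almost_acyclic :: "nat \<Rightarrow> 'v list set \<Rightarrow> bool" where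
  "almost_acyclic k E \<longleftrightarrow>
     (\<forall>F. F \<subseteq> E \<and> finite F \<longrightarrow>
        real (card (\<Union>e\<in>F. set e)) \<ge> real (card F) * (real k - 11/10))"

definition hadj :: "'v set \<Rightarrow> 'v list set \<Rightarrow> ('v \<times> 'v) set" where
  "hadj V E = {(u, w). u \<in> V \<and> w \<in> V \<and> (\<exists>e\<in>E. u \<in> set e \<and> w \<in> set e)}"

definition hcomponents :: "'v set \<Rightarrow> 'v list set \<Rightarrow> 'v set set" where
  "hcomponents V E = (\<lambda>v. {w \<in> V. (v, w) \<in> (hadj V E)\<^sup>*}) ` V"

definition nontriv_components :: "'v set \<Rightarrow> 'v list set \<Rightarrow> nat" where
  "nontriv_components V E = card {C \<in> hcomponents V E. card C \<ge> 2}"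

definition admissible_B :: "int \<Rightarrow> 'v set \<Rightarrow> 'v list set \<Rightarrow> ('v list \<Rightarrow> 'v \<Rightarrow> int) \<Rightarrow> bool" where
  "admissible_B N V E B \<longleftrightarrow>
     (\<forall>e\<in>E. zsupp N V (B e) \<subseteq> set e \<and> card (zsupp N V (B e)) \<ge> 3)"

definition SigmaB :: "'v list set \<Rightarrow> ('v list \<Rightarrow> 'v \<Rightarrow> int) \<Rightarrow> 'v \<Rightarrow> int" where
  "SigmaB E B = (\<lambda>v. \<Sum>e\<in>E. B e v)"

end

theory Submission
  imports Defs
begin

(* A vertex is uniquely covered by a set F of edges if it lies in the support of B e for exactly
   one e in F.  When F is closed under meeting supports, every other summand of \<Sigma>B vanishes at
   such a vertex, so it lies in the support of \<Sigma>B.  Double counting the incidences between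
   vertices and edges of F shows that at least
     \<Sum>|supp B e| - 2 (\<Sum>|e| - |\<Union>F|) \<ge> 3|F| - 2 * 1.1 |F| = 4/5 |F|
   vertices are uniquely covered, by almost-acyclicity.  Taking F = E gives the bound 4/5 |E|.
   Taking for F the edges inside a component with at least two vertices gives at least two such
   vertices per component (three if |F| = 1, and more than 8/5 otherwise), and components are
   disjoint. *)

definition uniquely_covered :: "'i set \<Rightarrow> ('i \<Rightarrow> 'v set) \<Rightarrow> 'v set" where
  "uniquely_covered F s = {v. card {e \<in> F. v \<in> s e} = 1}"

lemma uniquely_covered_iff: "v \<in> uniquely_covered F s \<longleftrightarrow> (\<exists>e. {e' \<in> F. v \<in> s e'} = {e})"
  by (simp add: uniquely_covered_def card_1_singleton_iff)

lemma uniquely_covered_subset_Union: "uniquely_covered F s \<subseteq> (\<Union>e\<in>F. s e)"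
proof
  fix v assume "v \<in> uniquely_covered F s"
  then obtain e where "{e' \<in> F. v \<in> s e'} = {e}"
    by (auto simp: uniquely_covered_iff)
  then show "v \<in> (\<Union>e\<in>F. s e)"
    by blast
qed

lemma uniquely_covered_singleton: "uniquely_covered {e} s = s e"
proof -
  have "{e' \<in> {e}. v \<in> s e'} = (if v \<in> s e then {e} else {})" for v
    by auto
  then show ?thesis
    by (auto simp: uniquely_covered_def)
qed

lemma card_uniquely_covered_ge:
  fixes A s :: "'i \<Rightarrow> 'v set"
  assumes F: "finite F" and A: "\<And>e. e \<in> F \<Longrightarrow> finite (A e)"
    and sA: "\<And>e. e \<in> F \<Longrightarrow> s e \<subseteq> A e"
  shows "real (\<Sum>e\<in>F. card (s e)) - 2 * (real (\<Sum>e\<in>F. card (A e)) - real (card (\<Union>e\<in>F. A e)))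
           \<le> real (card (uniquely_covered F s))"
proof -
  define W where "W = (\<Union>e\<in>F. A e)"
  define m where "m v = card {e \<in> F. v \<in> s e}" for v
  define M where "M v = card {e \<in> F. v \<in> A e}" for v
  have W: "finite W" using F A by (simp add: W_def)
  have "uniquely_covered F s \<subseteq> W"
    using uniquely_covered_subset_Union[of F s] sA by (force simp: W_def)
  then have "uniquely_covered F s = {v \<in> W. m v = 1}"
    by (auto simp: uniquely_covered_def m_def)
  then have unique: "real (card (uniquely_covered F s)) = (\<Sum>v\<in>W. if m v = 1 then 1 else 0)"
    using W by (simp add: sum.If_cases Int_def conj_commute)
  have pointwise: "real (m v) - 2 * (real (M v) - 1) \<le> (if m v = 1 then 1 else 0)" if "v \<in> W" for v
  proof -
    have "{e \<in> F. v \<in> A e} \<noteq> {}" using that by (auto simp: W_def)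
    then have "1 \<le> M v" using F by (simp add: M_def Suc_le_eq card_gt_0_iff)
    moreover have "m v \<le> M v" unfolding m_def M_def by (rule card_mono) (use F sA in auto)
    ultimately show ?thesis by auto
  qed
  have sum_m: "(\<Sum>v\<in>W. m v) = (\<Sum>e\<in>F. card (s e))"
    unfolding m_def
    by (rule sum_multicount_gen[OF W F]) (use sA in \<open>auto simp: W_def intro!: arg_cong[where f = card]\<close>)
  have sum_M: "(\<Sum>v\<in>W. M v) = (\<Sum>e\<in>F. card (A e))"
    unfolding M_def
    by (rule sum_multicount_gen[OF W F]) (auto simp: W_def intro!: arg_cong[where f = card])
  have "real (\<Sum>e\<in>F. card (s e)) - 2 * (real (\<Sum>e\<in>F. card (A e)) - real (card W))
      = (\<Sum>v\<in>W. real (m v) - 2 * (real (M v) - 1))"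
    by (simp add: sum_m [symmetric] sum_M [symmetric] of_nat_sum sum_subtractf sum.distrib
        sum_distrib_left algebra_simps)
  also have "\<dots> \<le> (\<Sum>v\<in>W. if m v = 1 then 1 else 0)"
    by (rule sum_mono) (rule pointwise)
  finally show ?thesis by (simp add: unique W_def)
qed

lemma finite_zsupp: "finite V \<Longrightarrow> finite (zsupp N V y)"
  by (simp add: zsupp_def)

lemma zsupp_SigmaB_if_unique:
  assumes "finite E" "e0 \<in> E" "v \<in> zsupp N V (B e0)"
    and unique: "\<And>e. e \<in> E \<Longrightarrow> v \<in> zsupp N V (B e) \<Longrightarrow> e = e0"
  shows "v \<in> zsupp N V (SigmaB E B)"
proof -
  have "N dvd B e v" if "e \<in> E - {e0}" for e
    using that assms(3) unique[of e] by (auto simp: zsupp_def)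
  then have "N dvd (\<Sum>e\<in>E - {e0}. B e v)"
    by (rule dvd_sum)
  moreover have "SigmaB E B v = B e0 v + (\<Sum>e\<in>E - {e0}. B e v)"
    unfolding SigmaB_def using assms(1,2) by (simp add: sum.remove)
  ultimately show ?thesis
    using assms(3) by (simp add: zsupp_def dvd_add_left_iff)
qed

lemma uniquely_covered_subset_zsupp_SigmaB:
  assumes "finite E" "F \<subseteq> E"
    and closed: "\<And>e e'. e \<in> E \<Longrightarrow> e' \<in> F \<Longrightarrow> zsupp N V (B e) \<inter> zsupp N V (B e') \<noteq> {} \<Longrightarrow> e \<in> F"
  shows "uniquely_covered F (\<lambda>e. zsupp N V (B e)) \<subseteq> zsupp N V (SigmaB E B)"
proof
  fix v assume "v \<in> uniquely_covered F (\<lambda>e. zsupp N V (B e))"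
  then obtain e0 where e0: "{e \<in> F. v \<in> zsupp N V (B e)} = {e0}"
    by (auto simp: uniquely_covered_iff)
  show "v \<in> zsupp N V (SigmaB E B)"
  proof (rule zsupp_SigmaB_if_unique[OF \<open>finite E\<close>])
    show "e0 \<in> E" "v \<in> zsupp N V (B e0)" using e0 \<open>F \<subseteq> E\<close> by auto
    show "e = e0" if "e \<in> E" "v \<in> zsupp N V (B e)" for e
      using that e0 closed[of e e0] by blast
  qed
qed

lemma uniform_hypergraph_finite_edges:
  assumes "uniform_hypergraph k V E"
  shows "finite E"
proof (rule finite_subset)
  show "E \<subseteq> {xs. set xs \<subseteq> V \<and> length xs = k}"
    using assms by (auto simp: uniform_hypergraph_def)
  show "finite {xs. set xs \<subseteq> V \<and> length xs = k}"
    using assms by (intro finite_lists_length_eq) (simp add: uniform_hypergraph_def)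
qed

lemma card_uniquely_covered_zsupp_ge:
  assumes "uniform_hypergraph k V E" "almost_acyclic k E" "admissible_B N V E B" "F \<subseteq> E"
  shows "4/5 * real (card F) \<le> real (card (uniquely_covered F (\<lambda>e. zsupp N V (B e))))"
proof -
  have edges: "\<And>e. e \<in> F \<Longrightarrow> card (set e) = k \<and> zsupp N V (B e) \<subseteq> set e \<and> 3 \<le> card (zsupp N V (B e))"
    using assms(1,3,4) by (auto simp: uniform_hypergraph_def admissible_B_def distinct_card)
  have F: "finite F"
    using uniform_hypergraph_finite_edges[OF assms(1)] assms(4) by (rule finite_subset[rotated])
  let ?U = "uniquely_covered F (\<lambda>e. zsupp N V (B e))"
  have count: "real (\<Sum>e\<in>F. card (zsupp N V (B e)))
          - 2 * (real (\<Sum>e\<in>F. card (set e)) - real (card (\<Union>e\<in>F. set e)))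
        \<le> real (card ?U)"
    by (rule card_uniquely_covered_ge) (use F edges in auto)
  have "3 * card F \<le> (\<Sum>e\<in>F. card (zsupp N V (B e)))"
    using sum_mono[of F "\<lambda>_. 3" "\<lambda>e. card (zsupp N V (B e))"] edges by simp
  then have supports: "3 * real (card F) \<le> real (\<Sum>e\<in>F. card (zsupp N V (B e)))"
    by linarith
  have "(\<Sum>e\<in>F. card (set e)) = k * card F"
    using edges by simp
  then have sizes: "real (\<Sum>e\<in>F. card (set e)) = real k * real (card F)"
    by simp
  have "real (card F) * (real k - 11/10) \<le> real (card (\<Union>e\<in>F. set e))"
    using assms(2,4) F by (simp add: almost_acyclic_def)
  then have "real k * real (card F) - 11/10 * real (card F) \<le> real (card (\<Union>e\<in>F. set e))"
    by (simp add: algebra_simps)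
  with count supports sizes show ?thesis
    by argo
qed

lemma four_fifths_card_edges_le_hnorm:
  assumes "uniform_hypergraph k V E" "almost_acyclic k E" "admissible_B N V E B"
  shows "4/5 * real (card E) \<le> real (hnorm N V (SigmaB E B))"
proof -
  have "uniquely_covered E (\<lambda>e. zsupp N V (B e)) \<subseteq> zsupp N V (SigmaB E B)"
    by (rule uniquely_covered_subset_zsupp_SigmaB[OF uniform_hypergraph_finite_edges[OF assms(1)]]) auto
  moreover have "finite (zsupp N V (SigmaB E B))"
    using assms(1) by (simp add: uniform_hypergraph_def finite_zsupp)
  ultimately have "card (uniquely_covered E (\<lambda>e. zsupp N V (B e))) \<le> hnorm N V (SigmaB E B)"
    unfolding hnorm_def by (rule card_mono[rotated])
  with card_uniquely_covered_zsupp_ge[OF assms order_refl] show ?thesis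
    by linarith
qed

definition hconnected :: "'v set \<Rightarrow> 'v list set \<Rightarrow> ('v \<times> 'v) set" where
  "hconnected V E = (hadj V E)\<^sup>* \<inter> V \<times> V"

lemma equiv_hconnected: "equiv V (hconnected V E)"
proof (rule equivI)
  show "hconnected V E \<subseteq> V \<times> V"
    by (simp add: hconnected_def)
  have "sym ((hadj V E)\<^sup>*)"
    by (rule sym_rtrancl) (auto simp: sym_def hadj_def)
  then show "sym (hconnected V E)"
    by (auto simp: hconnected_def sym_def)
  show "refl_on V (hconnected V E)"
    by (auto simp: refl_on_def hconnected_def)
  show "trans (hconnected V E)"
    by (auto simp: trans_def hconnected_def)
qed

lemma hcomponents_eq_quotient: "hcomponents V E = V // hconnected V E"
  by (auto simp: hcomponents_def quotient_def hconnected_def)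

lemma edge_subset_hcomponent:
  assumes "C \<in> hcomponents V E" "e \<in> E" "set e \<subseteq> V" "u \<in> set e" "u \<in> C"
  shows "set e \<subseteq> C"
proof
  fix w assume "w \<in> set e"
  with assms(2-4) have "(u, w) \<in> hconnected V E"
    by (auto simp: hconnected_def hadj_def)
  with assms(1,5) show "w \<in> C"
    unfolding hcomponents_eq_quotient by (rule in_quotient_imp_closed[OF equiv_hconnected])
qed

lemma hcomponent_meets_edge:
  assumes "C \<in> hcomponents V E" "2 \<le> card C"
  obtains e u where "e \<in> E" "u \<in> set e" "u \<in> C"
proof -
  have "finite C" "\<not> card C \<le> Suc 0"
    using assms(2) card.infinite by fastforce+
  then obtain a w where "a \<in> C" "w \<in> C" "a \<noteq> w"
    by (auto simp: card_le_Suc0_iff_eq)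
  moreover from this have "(a, w) \<in> (hadj V E)\<^sup>*"
    using in_quotient_imp_in_rel[OF equiv_hconnected assms(1)[unfolded hcomponents_eq_quotient]]
    by (auto simp: hconnected_def)
  ultimately obtain y where "(a, y) \<in> hadj V E"
    by (auto elim: converse_rtranclE)
  then show ?thesis
    using that \<open>a \<in> C\<close> by (auto simp: hadj_def)
qed

lemma two_le_card_uniquely_covered_zsupp:
  assumes hyp: "uniform_hypergraph k V E" "almost_acyclic k E" "admissible_B N V E B"
    and "F \<subseteq> E" "F \<noteq> {}"
  shows "2 \<le> card (uniquely_covered F (\<lambda>e. zsupp N V (B e)))"
proof -
  have "finite F"
    using uniform_hypergraph_finite_edges[OF hyp(1)] \<open>F \<subseteq> E\<close> by (rule finite_subset[rotated])
  with \<open>F \<noteq> {}\<close> consider e where "F = {e}" | "2 \<le> card F"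
    by (metis card_1_singleton_iff card_gt_0_iff One_nat_def Suc_1 Suc_leI antisym_conv2)
  then show ?thesis
  proof cases
    case 1
    with hyp(3) \<open>F \<subseteq> E\<close> have "3 \<le> card (zsupp N V (B e))"
      by (simp add: admissible_B_def)
    with 1 show ?thesis
      by (simp add: uniquely_covered_singleton)
  next
    case 2
    with card_uniquely_covered_zsupp_ge[OF hyp \<open>F \<subseteq> E\<close>] show ?thesis
      by linarith
  qed
qed

lemma card_zsupp_SigmaB_inter_hcomponent_ge:
  assumes hyp: "uniform_hypergraph k V E" "almost_acyclic k E" "admissible_B N V E B"
    and C: "C \<in> hcomponents V E" "2 \<le> card C"
  shows "2 \<le> card (zsupp N V (SigmaB E B) \<inter> C)"
proof -
  define F where "F = {e \<in> E. set e \<subseteq> C}"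
  define U where "U = uniquely_covered F (\<lambda>e. zsupp N V (B e))"
  have edges: "\<And>e. e \<in> E \<Longrightarrow> set e \<subseteq> V \<and> zsupp N V (B e) \<subseteq> set e"
    using hyp(1,3) by (auto simp: uniform_hypergraph_def admissible_B_def)
  have "U \<subseteq> zsupp N V (SigmaB E B)"
    unfolding U_def
  proof (rule uniquely_covered_subset_zsupp_SigmaB[OF uniform_hypergraph_finite_edges[OF hyp(1)]])
    show "F \<subseteq> E" by (simp add: F_def)
    show "e \<in> F" if "e \<in> E" "e' \<in> F" "zsupp N V (B e) \<inter> zsupp N V (B e') \<noteq> {}" for e e'
      using that edges edge_subset_hcomponent[OF C(1)] unfolding F_def by blast
  qed
  moreover have "U \<subseteq> C"
    using uniquely_covered_subset_Union[of F] edges by (fastforce simp: U_def F_def)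
  moreover have "finite (zsupp N V (SigmaB E B))"
    using hyp(1) by (simp add: uniform_hypergraph_def finite_zsupp)
  ultimately have "card U \<le> card (zsupp N V (SigmaB E B) \<inter> C)"
    by (intro card_mono) auto
  moreover obtain e u where "e \<in> E" "u \<in> set e" "u \<in> C"
    using hcomponent_meets_edge[OF C] .
  then have "F \<noteq> {}"
    using edge_subset_hcomponent[OF C(1)] edges by (auto simp: F_def)
  then have "2 \<le> card U"
    using two_le_card_uniquely_covered_zsupp[OF hyp, of F] by (simp add: U_def F_def)
  ultimately show ?thesis
    by linarith
qed

lemma twice_nontriv_components_le_hnorm:
  assumes "uniform_hypergraph k V E" "almost_acyclic k E" "admissible_B N V E B"
  shows "2 * nontriv_components V E \<le> hnorm N V (SigmaB E B)"
proof -
  define S where "S = zsupp N V (SigmaB E B)"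
  define T where "T = {C \<in> hcomponents V E. 2 \<le> card C}"
  have S: "finite S"
    using assms(1) by (simp add: S_def uniform_hypergraph_def finite_zsupp)
  have T: "finite T"
    using assms(1) by (simp add: T_def hcomponents_def uniform_hypergraph_def)
  have "2 * card T = (\<Sum>C\<in>T. 2)"
    by simp
  also have "\<dots> \<le> (\<Sum>C\<in>T. card (S \<inter> C))"
    by (rule sum_mono) (use card_zsupp_SigmaB_inter_hcomponent_ge[OF assms] in \<open>auto simp: S_def T_def\<close>)
  also have "\<dots> = card (\<Union>C\<in>T. S \<inter> C)"
  proof (rule card_UN_disjoint[symmetric, OF T])
    show "\<forall>C\<in>T. finite (S \<inter> C)" using S by simp
    show "\<forall>C\<in>T. \<forall>C'\<in>T. C \<noteq> C' \<longrightarrow> (S \<inter> C) \<inter> (S \<inter> C') = {}"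
      using quotient_disj[OF equiv_hconnected] by (fastforce simp: T_def hcomponents_eq_quotient)
  qed
  also have "\<dots> \<le> card S"
    by (rule card_mono[OF S]) auto
  finally show ?thesis
    by (simp add: nontriv_components_def hnorm_def S_def T_def)
qed

theorem lemma7p10:
  fixes N :: int and k :: nat and V :: "'v set" and E :: "'v list set"
    and B :: "'v list \<Rightarrow> 'v \<Rightarrow> int"
  assumes "N \<ge> 2"
    and "uniform_hypergraph k V E"
    and "almost_acyclic k E"
    and "admissible_B N V E B"
  shows "real (hnorm N V (SigmaB E B))
           \<ge> max (2 * real (nontriv_components V E)) (4/5 * real (card E))"
  using twice_nontriv_components_le_hnorm[OF assms(2-4)] four_fifths_card_edges_le_hnorm[OF assms(2-4)]
  by simp

end
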